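(* For a measurable space $X$, the following are equivalent: (i) $X$ is sober, i.e. the diagram $X\xrightarrow{\delta}PX\rightrightarrows PPX$ with the two parallel maps $\delta_{PX}$ and $P\delta_X$ is an equalizer diagram in the category of measurable spaces; (ii) the map $x\mapsto\delta_x$ is a bijection between points of $X$ and $\{0,1\}$-valued probability measures on $X$; (iii) the map $X\to\mathrm{Stone}_\sigma(\Sigma(X))$, $x\mapsto(E\mapsto \top\text{ if }x\in E,\ \bot\text{ otherwise})$, is an isomorphism of measurable spaces.
   Context: For a measurable space $X$ with $\sigma$-algebra $\Sigma(X)$, $PX$ is the set of probability measures on $X$ with the smallest $\sigma$-algebra making $p\mapsto p(B)$ measurable for all $B\in\Sigma(X)$; for measurable $f$, $Pf$ is pushforward of measures; $\delta\colon X\to PX$ sends $x$ to the Dirac measure $\delta_x$. For a Boolean $\sigma$-algebra $A$ (a Boolean algebra with countable suprema and infima), $\mathrm{Stone}_\sigma(A)$ is the set of Boolean homomorphisms $A\to\{\bot,\top\}$ preserving countable suprema, equipped with the $\sigma$-algebra consisting of the sets $[a]=\{\phi:\phi(a)=\top\}$, $a\in A$. *)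

theory Defs
  imports "HOL-Probability.Probability"
begin

text \<open>P X is the space of probability measures on X (Giry monad, prob_algebra);
  delta is return; P f is pushforward (distr).\<close>

abbreviation PP :: "'a measure \<Rightarrow> 'a measure measure" where
  "PP X \<equiv> prob_algebra X"

text \<open>Sobriety: X --delta--> PX ==> PPX (delta_PX and P delta_X) is an equalizer
  in the category of measurable spaces.  Test objects Z range over measurable
  spaces of an arbitrary (but fixed) type 'z.\<close>

definition sober :: "'z itself \<Rightarrow> 'a measure \<Rightarrow> bool" where
  "sober _ X \<longleftrightarrow>
     return X \<in> X \<rightarrow>\<^sub>M PP X \<and>
     (\<forall>x\<in>space X. return (PP X) (return X x) = distr (return X x) (PP X) (return X)) \<and>
     (\<forall>(Z::'z measure) g. g \<in> Z \<rightarrow>\<^sub>M PP X \<and>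
        (\<forall>z\<in>space Z. return (PP X) (g z) = distr (g z) (PP X) (return X)) \<longrightarrow>
        (\<exists>h. h \<in> Z \<rightarrow>\<^sub>M X \<and> (\<forall>z\<in>space Z. return X (h z) = g z) \<and>
             (\<forall>h'. h' \<in> Z \<rightarrow>\<^sub>M X \<and> (\<forall>z\<in>space Z. return X (h' z) = g z) \<longrightarrow>
                   (\<forall>z\<in>space Z. h' z = h z))))"

definition zero_one_measures :: "'a measure \<Rightarrow> 'a measure set" where
  "zero_one_measures X =
     {p \<in> space (PP X). \<forall>A\<in>sets X. emeasure p A = 0 \<or> emeasure p A = 1}"

text \<open>Boolean sigma-homomorphisms Sigma(X) -> {False, True}; represented as
  predicates on sets, equal to False outside sets X (extensionality).\<close>

definition sigma_hom :: "'a measure \<Rightarrow> ('a set \<Rightarrow> bool) \<Rightarrow> bool" where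
  "sigma_hom X \<phi> \<longleftrightarrow>
     (\<forall>E. E \<notin> sets X \<longrightarrow> \<not> \<phi> E) \<and>
     \<phi> (space X) \<and> \<not> \<phi> {} \<and>
     (\<forall>E\<in>sets X. \<phi> (space X - E) \<longleftrightarrow> \<not> \<phi> E) \<and>
     (\<forall>E\<in>sets X. \<forall>F\<in>sets X. \<phi> (E \<inter> F) \<longleftrightarrow> \<phi> E \<and> \<phi> F) \<and>
     (\<forall>E\<in>sets X. \<forall>F\<in>sets X. \<phi> (E \<union> F) \<longleftrightarrow> \<phi> E \<or> \<phi> F) \<and>
     (\<forall>F::nat \<Rightarrow> 'a set. range F \<subseteq> sets X \<longrightarrow> (\<phi> (\<Union>(range F)) \<longleftrightarrow> (\<exists>n. \<phi> (F n))))"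

definition Stone_sigma :: "'a measure \<Rightarrow> ('a set \<Rightarrow> bool) measure" where
  "Stone_sigma X = measure_of {\<phi>. sigma_hom X \<phi>}
      ((\<lambda>a. {\<phi>. sigma_hom X \<phi> \<and> \<phi> a}) ` sets X) (\<lambda>_. 0)"

definition stone_unit :: "'a measure \<Rightarrow> 'a \<Rightarrow> ('a set \<Rightarrow> bool)" where
  "stone_unit X x = (\<lambda>E. E \<in> sets X \<and> x \<in> E)"

definition measurable_iso :: "'a measure \<Rightarrow> 'b measure \<Rightarrow> ('a \<Rightarrow> 'b) \<Rightarrow> bool" where
  "measurable_iso M N f \<longleftrightarrow>
     f \<in> M \<rightarrow>\<^sub>M N \<and>
     (\<exists>g. g \<in> N \<rightarrow>\<^sub>M M \<and> (\<forall>x\<in>space M. g (f x) = x) \<and> (\<forall>y\<in>space N. f (g y) = y))"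

end

theory Submission
  imports Defs
begin

text \<open>A probability measure \<open>p\<close> on \<open>X\<close> satisfies
  \<open>\<delta>\<^sub>P\<^sub>X(p) = P\<delta>\<^sub>X(p)\<close> iff it is \<open>{0,1}\<close>-valued: evaluating both sides on
  \<open>{q. q(A) = 1}\<close> gives \<open>p(A) = [p(A) = 1]\<close>; conversely, for \<open>{0,1}\<close>-valued \<open>p\<close>
  the sets \<open>S \<subseteq> PX\<close> with \<open>p(\<delta>\<^sup>-\<^sup>1 S) = [p \<in> S]\<close> form a \<open>\<sigma>\<close>-algebra containing
  the generators of \<open>PX\<close>. So the equalizer is the subspace of \<open>{0,1}\<close>-valued measures,
  and sobriety says that \<open>\<delta>\<close> is a bijection onto it; measurability of the inverse is
  automatic because \<open>x \<in> A\<close> iff \<open>\<delta>\<^sub>x(A) = 1\<close>. Finally \<open>p \<mapsto> {A. p(A) = 1}\<close> is a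
  bijection from \<open>{0,1}\<close>-valued measures onto the \<open>\<sigma>\<close>-homomorphisms \<open>\<Sigma>(X) \<rightarrow> 2\<close>
  which turns \<open>\<delta>\<close> into the Stone unit, and an inverse of the Stone unit is measurable
  since it pulls \<open>A\<close> back to the basic set \<open>[A]\<close>.\<close>

lemma zero_one_measuresD:
  assumes "p \<in> zero_one_measures X"
  shows "prob_space p" "sets p = sets X" "space p = space X"
    and "A \<in> sets X \<Longrightarrow> emeasure p A = 0 \<or> emeasure p A = 1"
  using assms by (auto simp: zero_one_measures_def space_prob_algebra dest: sets_eq_imp_space_eq)

lemma return_in_space_prob_algebra: "x \<in> space X \<Longrightarrow> return X x \<in> space (PP X)"
  using measurable_space[OF measurable_return_prob_space] .

lemma return_in_zero_one_measures: "x \<in> space X \<Longrightarrow> return X x \<in> zero_one_measures X"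
  by (auto simp: zero_one_measures_def indicator_def return_in_space_prob_algebra)

lemma measurable_emeasure_prob_algebra[measurable]:
  "A \<in> sets X \<Longrightarrow> (\<lambda>q. emeasure q A) \<in> borel_measurable (PP X)"
  unfolding prob_algebra_def by (intro measurable_restrict_space1 measurable_emeasure_subprob_algebra)

lemma sigma_homI:
  assumes outside: "\<And>E. E \<notin> sets X \<Longrightarrow> \<not> \<phi> E"
    and space: "\<phi> (space X)"
    and compl: "\<And>E. E \<in> sets X \<Longrightarrow> \<phi> (space X - E) \<longleftrightarrow> \<not> \<phi> E"
    and countable_Union: "\<And>F::nat \<Rightarrow> 'a set. range F \<subseteq> sets X \<Longrightarrow> \<phi> (\<Union>(range F)) \<longleftrightarrow> (\<exists>n. \<phi> (F n))"
  shows "sigma_hom X \<phi>"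
proof -
  have Un: "\<phi> (E \<union> F) \<longleftrightarrow> \<phi> E \<or> \<phi> F" if "E \<in> sets X" "F \<in> sets X" for E F
  proof -
    have "(\<exists>n. \<phi> (binary E F n)) \<longleftrightarrow> \<phi> E \<or> \<phi> F"
      by (metis binary_def fun_upd_same fun_upd_other zero_neq_one)
    then show ?thesis
      using countable_Union[of "binary E F"] that by (simp add: range_binary_eq)
  qed
  have Int: "\<phi> (E \<inter> F) \<longleftrightarrow> \<phi> E \<and> \<phi> F" if "E \<in> sets X" "F \<in> sets X" for E F
  proof -
    have "E \<inter> F = space X - ((space X - E) \<union> (space X - F))"
      using that sets.sets_into_space by blast
    then show ?thesis using that by (simp add: compl Un)
  qed
  have "\<not> \<phi> {}" using compl[of "space X"] space by simp
  then show ?thesis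
    unfolding sigma_hom_def using outside space compl countable_Union Un Int by blast
qed

definition hom_of_measure :: "'a measure \<Rightarrow> 'a measure \<Rightarrow> 'a set \<Rightarrow> bool" where
  "hom_of_measure X p = (\<lambda>A. A \<in> sets X \<and> emeasure p A = 1)"

lemma sigma_hom_hom_of_measure:
  assumes p: "p \<in> zero_one_measures X"
  shows "sigma_hom X (hom_of_measure X p)"
proof -
  interpret prob_space p using zero_one_measuresD(1)[OF p] .
  note sets_p = zero_one_measuresD(2,3)[OF p] and zero_one = zero_one_measuresD(4)[OF p]
  show ?thesis
  proof (rule sigma_homI)
    show "hom_of_measure X p (space X)"
      using emeasure_space_1 by (simp add: hom_of_measure_def sets_p)
  next
    fix E assume E: "E \<in> sets X"
    have "emeasure p (space X - E) = 1 - emeasure p E"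
      using emeasure_compl[of E p] emeasure_space_1 E by (simp add: sets_p emeasure_finite)
    then show "hom_of_measure X p (space X - E) \<longleftrightarrow> \<not> hom_of_measure X p E"
      using zero_one[OF E] E by (auto simp: hom_of_measure_def)
  next
    fix F :: "nat \<Rightarrow> 'a set" assume F: "range F \<subseteq> sets X"
    show "hom_of_measure X p (\<Union>(range F)) \<longleftrightarrow> (\<exists>n. hom_of_measure X p (F n))"
    proof (cases "\<exists>n. emeasure p (F n) = 1")
      case True
      then obtain n where "emeasure p (F n) = 1" by blast
      moreover have "emeasure p (F n) \<le> emeasure p (\<Union>(range F))"
        using F by (intro emeasure_mono) (auto simp: sets_p)
      ultimately show ?thesis
        using F emeasure_le_1[of "\<Union>(range F)"] by (auto simp: hom_of_measure_def)
    next
      case False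
      then have "emeasure p (\<Union>(range F)) = 0"
        using F zero_one by (intro emeasure_UN_eq_0) (auto simp: sets_p)
      then show ?thesis using False by (simp add: hom_of_measure_def)
    qed
  qed (simp add: hom_of_measure_def)
qed

lemma hom_of_measure_inj: "inj_on (hom_of_measure X) (zero_one_measures X)"
proof (rule inj_onI)
  fix p q assume p: "p \<in> zero_one_measures X" and q: "q \<in> zero_one_measures X"
    and eq: "hom_of_measure X p = hom_of_measure X q"
  show "p = q"
  proof (rule measure_eqI)
    show "sets p = sets q" using zero_one_measuresD(2) p q by metis
  next
    fix A assume "A \<in> sets p"
    then have A: "A \<in> sets X" using zero_one_measuresD(2)[OF p] by simp
    have "emeasure p A = 1 \<longleftrightarrow> emeasure q A = 1"
      using fun_cong[OF eq, of A] A by (simp add: hom_of_measure_def)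
    then show "emeasure p A = emeasure q A"
      using zero_one_measuresD(4)[OF p A] zero_one_measuresD(4)[OF q A] by auto
  qed
qed

definition measure_of_hom :: "'a measure \<Rightarrow> ('a set \<Rightarrow> bool) \<Rightarrow> 'a measure" where
  "measure_of_hom X \<phi> = measure_of (space X) (sets X) (\<lambda>A. if \<phi> A then 1 else 0)"

lemma countably_additive_sigma_hom:
  assumes "sigma_hom X \<phi>"
  shows "countably_additive (sets X) (\<lambda>A. if \<phi> A then 1 else 0 :: ennreal)"
  unfolding countably_additive_def
proof (intro allI impI)
  note hom = assms[unfolded sigma_hom_def]
  fix A :: "nat \<Rightarrow> 'a set" assume A: "range A \<subseteq> sets X" and disj: "disjoint_family A"
  have unique: "m = n" if "\<phi> (A m)" "\<phi> (A n)" for m n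
  proof (rule ccontr)
    assume "m \<noteq> n"
    then have "A m \<inter> A n = {}" using disj by (auto simp: disjoint_family_on_def)
    then show False using hom that A by (metis range_subsetD)
  qed
  show "(\<Sum>i. if \<phi> (A i) then 1 else 0) = (if \<phi> (\<Union>i. A i) then 1 else 0 :: ennreal)"
  proof (cases "\<exists>n. \<phi> (A n)")
    case True
    then obtain n where n: "\<phi> (A n)" by blast
    have "(\<Sum>i. if \<phi> (A i) then 1 else 0) = (\<Sum>i\<in>{n}. if \<phi> (A i) then 1 else 0 :: ennreal)"
      by (rule suminf_finite) (use unique n in auto)
    then show ?thesis using hom A n by auto
  next
    case False
    then show ?thesis using hom A by simp
  qed
qed

lemma
  assumes \<phi>: "sigma_hom X \<phi>"
  shows measure_of_hom_in_zero_one_measures: "measure_of_hom X \<phi> \<in> zero_one_measures X"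
    and hom_of_measure_of_hom: "hom_of_measure X (measure_of_hom X \<phi>) = \<phi>"
proof -
  note hom = \<phi>[unfolded sigma_hom_def]
  have "positive (sets X) (\<lambda>A. if \<phi> A then 1 else 0)" using hom by (simp add: positive_def)
  then have emeasure_eq: "emeasure (measure_of_hom X \<phi>) A = (if \<phi> A then 1 else 0)" if "A \<in> sets X" for A
    unfolding measure_of_hom_def using that sets.sigma_algebra_axioms countably_additive_sigma_hom[OF \<phi>]
    by (intro emeasure_measure_of_sigma) auto
  have sets_eq: "sets (measure_of_hom X \<phi>) = sets X" and space_eq: "space (measure_of_hom X \<phi>) = space X"
    by (simp_all add: measure_of_hom_def)
  have "prob_space (measure_of_hom X \<phi>)"
    using hom by (intro prob_spaceI) (simp add: space_eq emeasure_eq)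
  then show "measure_of_hom X \<phi> \<in> zero_one_measures X"
    by (simp add: zero_one_measures_def space_prob_algebra sets_eq emeasure_eq)
  show "hom_of_measure X (measure_of_hom X \<phi>) = \<phi>"
  proof
    fix A
    show "hom_of_measure X (measure_of_hom X \<phi>) A = \<phi> A"
      using hom by (cases "A \<in> sets X") (auto simp: hom_of_measure_def emeasure_eq)
  qed
qed

lemma space_Stone_sigma: "space (Stone_sigma X) = {\<phi>. sigma_hom X \<phi>}"
  unfolding Stone_sigma_def by (rule space_measure_of) auto

lemma Stone_sigma_basic_sets: "A \<in> sets X \<Longrightarrow> {\<phi> \<in> space (Stone_sigma X). \<phi> A} \<in> sets (Stone_sigma X)"
  unfolding space_Stone_sigma unfolding Stone_sigma_def by (subst sets_measure_of) auto

lemma bij_betw_hom_of_measure: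
  "bij_betw (hom_of_measure X) (zero_one_measures X) (space (Stone_sigma X))"
proof -
  have "\<phi> \<in> hom_of_measure X ` zero_one_measures X" if "sigma_hom X \<phi>" for \<phi>
    using that measure_of_hom_in_zero_one_measures hom_of_measure_of_hom by (metis image_eqI)
  then show ?thesis
    unfolding bij_betw_def space_Stone_sigma
    using hom_of_measure_inj sigma_hom_hom_of_measure by auto
qed

lemma stone_unit_eq_hom_of_measure_return:
  "x \<in> space X \<Longrightarrow> stone_unit X x = hom_of_measure X (return X x)"
  by (auto simp: stone_unit_def hom_of_measure_def indicator_def)

lemma sigma_hom_stone_unit: "x \<in> space X \<Longrightarrow> sigma_hom X (stone_unit X x)"
  by (simp add: stone_unit_eq_hom_of_measure_return sigma_hom_hom_of_measure return_in_zero_one_measures)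

lemma measurable_stone_unit: "stone_unit X \<in> X \<rightarrow>\<^sub>M Stone_sigma X"
  unfolding Stone_sigma_def
proof (rule measurable_measure_of)
  show "stone_unit X \<in> space X \<rightarrow> {\<phi>. sigma_hom X \<phi>}"
    by (auto intro: sigma_hom_stone_unit)
next
  fix S assume "S \<in> (\<lambda>A. {\<phi>. sigma_hom X \<phi> \<and> \<phi> A}) ` sets X"
  then obtain A where A: "A \<in> sets X" and S: "S = {\<phi>. sigma_hom X \<phi> \<and> \<phi> A}" by blast
  have "stone_unit X -` S \<inter> space X = {x \<in> space X. stone_unit X x A}"
    using sigma_hom_stone_unit by (auto simp: S)
  also have "\<dots> = A"
    using A sets.sets_into_space[OF A] by (auto simp: stone_unit_def)
  finally show "stone_unit X -` S \<inter> space X \<in> sets X" using A by simp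
qed auto

lemma measurable_iso_imp_bij_betw:
  "measurable_iso M N f \<Longrightarrow> bij_betw f (space M) (space N)"
  unfolding measurable_iso_def by (auto intro: bij_betw_byWitness measurable_space)

lemma measurable_iso_stone_unit_iff:
  "measurable_iso X (Stone_sigma X) (stone_unit X) \<longleftrightarrow> bij_betw (stone_unit X) (space X) (space (Stone_sigma X))"
proof
  assume bij: "bij_betw (stone_unit X) (space X) (space (Stone_sigma X))"
  define g where "g = the_inv_into (space X) (stone_unit X)"
  have g_space: "g \<phi> \<in> space X" and stone_unit_g: "stone_unit X (g \<phi>) = \<phi>"
    if "\<phi> \<in> space (Stone_sigma X)" for \<phi>
    using that bij bij_betw_the_inv_into[OF bij] f_the_inv_into_f_bij_betw[OF bij]
    by (auto simp: g_def bij_betw_def)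
  have "g \<in> Stone_sigma X \<rightarrow>\<^sub>M X"
  proof (rule measurableI)
    fix A assume A: "A \<in> sets X"
    have "g \<phi> \<in> A \<longleftrightarrow> \<phi> A" if "\<phi> \<in> space (Stone_sigma X)" for \<phi>
      using fun_cong[OF stone_unit_g[OF that], of A] A by (simp add: stone_unit_def)
    then have "g -` A \<inter> space (Stone_sigma X) = {\<phi> \<in> space (Stone_sigma X). \<phi> A}"
      by blast
    then show "g -` A \<inter> space (Stone_sigma X) \<in> sets (Stone_sigma X)"
      using Stone_sigma_basic_sets[OF A] by simp
  qed (rule g_space)
  moreover have "g (stone_unit X x) = x" if "x \<in> space X" for x
    using bij that by (simp add: g_def bij_betw_def the_inv_into_f_f)
  ultimately show "measurable_iso X (Stone_sigma X) (stone_unit X)"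
    unfolding measurable_iso_def using measurable_stone_unit stone_unit_g by blast
qed (rule measurable_iso_imp_bij_betw)

lemma bij_betw_return_iff_measurable_iso_stone_unit:
  "bij_betw (return X) (space X) (zero_one_measures X) \<longleftrightarrow> measurable_iso X (Stone_sigma X) (stone_unit X)"
proof -
  have "bij_betw (return X) (space X) (zero_one_measures X) \<longleftrightarrow>
      bij_betw (hom_of_measure X \<circ> return X) (space X) (space (Stone_sigma X))"
    using bij_betw_hom_of_measure return_in_zero_one_measures by (intro bij_betw_comp_iff2) auto
  also have "\<dots> \<longleftrightarrow> bij_betw (stone_unit X) (space X) (space (Stone_sigma X))"
    by (intro bij_betw_cong) (simp add: stone_unit_eq_hom_of_measure_return)
  finally show ?thesis by (simp add: measurable_iso_stone_unit_iff)
qed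

lemma sigma_algebra_hom_vimage_eq_evaluation:
  assumes \<phi>: "sigma_hom X \<phi>" and f: "f \<in> space X \<rightarrow> \<Omega>" and y: "y \<in> \<Omega>"
  shows "sigma_algebra \<Omega> {S. S \<subseteq> \<Omega> \<and> f -` S \<inter> space X \<in> sets X \<and> (\<phi> (f -` S \<inter> space X) \<longleftrightarrow> y \<in> S)}"
    (is "sigma_algebra \<Omega> ?D")
  unfolding sigma_algebra_iff2
proof (intro conjI ballI allI impI)
  fix S assume S: "S \<in> ?D"
  have "f -` (\<Omega> - S) \<inter> space X = space X - (f -` S \<inter> space X)"
    using f by auto
  then show "\<Omega> - S \<in> ?D"
    using S \<phi> y by (auto simp: sigma_hom_def)
next
  fix F :: "nat \<Rightarrow> _" assume F: "range F \<subseteq> ?D"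
  define G where "G i = f -` F i \<inter> space X" for i
  have G: "range G \<subseteq> sets X" "\<And>i. \<phi> (G i) \<longleftrightarrow> y \<in> F i"
    using F by (auto simp: G_def)
  have "f -` (\<Union>i. F i) \<inter> space X = (\<Union>i. G i)"
    by (auto simp: G_def)
  moreover have "\<phi> (\<Union>i. G i) \<longleftrightarrow> y \<in> (\<Union>i. F i)"
    using \<phi> G by (auto simp: sigma_hom_def)
  ultimately show "(\<Union>i. F i) \<in> ?D"
    using F G by auto
qed (use \<phi> in \<open>auto simp: sigma_hom_def\<close>)

lemma sets_prob_algebra_subset:
  assumes D: "sigma_algebra (space (PP X)) D"
    and evaluations: "\<And>A B. A \<in> sets X \<Longrightarrow> B \<in> sets borel \<Longrightarrow> {q \<in> space (PP X). emeasure q A \<in> B} \<in> D"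
  shows "sets (PP X) \<subseteq> D"
proof -
  define M where "M = measure_of (space (PP X)) D (\<lambda>_. 0)"
  have space_M: "space M = space (PP X)" and sets_M: "sets M = D"
    using D by (simp_all add: M_def sigma_algebra.space_measure_of_eq sigma_algebra.sets_measure_of_eq)
  have id_measurable: "(\<lambda>q. q) \<in> M \<rightarrow>\<^sub>M PP X"
  proof (intro measurable_prob_algebraI measurable_subprob_algebra)
    fix A assume A: "A \<in> sets X"
    show "(\<lambda>q. emeasure q A) \<in> borel_measurable M"
    proof (rule measurableI)
      fix B :: "ennreal set" assume "B \<in> sets borel"
      moreover have "(\<lambda>q. emeasure q A) -` B \<inter> space M = {q \<in> space (PP X). emeasure q A \<in> B}"
        by (auto simp: space_M)
      ultimately show "(\<lambda>q. emeasure q A) -` B \<inter> space M \<in> sets M"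
        using evaluations[OF A] by (simp add: sets_M)
    qed simp
  qed (auto simp: space_M space_prob_algebra prob_space_imp_subprob_space)
  have "S \<in> D" if "S \<in> sets (PP X)" for S
    using measurable_sets[OF id_measurable that] sets.sets_into_space[OF that]
    by (simp add: space_M sets_M Int_absorb2)
  then show ?thesis by blast
qed

lemma hom_of_measure_vimage_return:
  assumes p: "p \<in> zero_one_measures X" and S: "S \<in> sets (PP X)"
  shows "hom_of_measure X p (return X -` S \<inter> space X) \<longleftrightarrow> p \<in> S"
proof -
  let ?\<phi> = "hom_of_measure X p" and ?\<Omega> = "space (PP X)"
  define D where "D = {S. S \<subseteq> ?\<Omega> \<and> return X -` S \<inter> space X \<in> sets X \<and>
    (?\<phi> (return X -` S \<inter> space X) \<longleftrightarrow> p \<in> S)}"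
  have hom: "sigma_hom X ?\<phi>" using sigma_hom_hom_of_measure[OF p] .
  have return_space: "return X \<in> space X \<rightarrow> ?\<Omega>"
    using return_in_space_prob_algebra by (rule Pi_I)
  have p_space: "p \<in> ?\<Omega>" using p by (simp add: zero_one_measures_def)
  have "sigma_algebra ?\<Omega> D"
    unfolding D_def using hom return_space p_space by (rule sigma_algebra_hom_vimage_eq_evaluation)
  moreover have "{q \<in> ?\<Omega>. emeasure q A \<in> B} \<in> D" if A: "A \<in> sets X" for A B
  proof -
    let ?T = "(if 1 \<in> B then A else {}) \<union> (if 0 \<in> B then space X - A else {})"
    have T: "return X -` {q \<in> ?\<Omega>. emeasure q A \<in> B} \<inter> space X = ?T"
      using return_space A sets.sets_into_space[OF A] by (auto simp: indicator_def)
    have "?\<phi> ?T \<longleftrightarrow> (1 \<in> B \<and> ?\<phi> A) \<or> (0 \<in> B \<and> \<not> ?\<phi> A)"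
      using hom A by (simp add: sigma_hom_def)
    also have "\<dots> \<longleftrightarrow> emeasure p A \<in> B"
      using zero_one_measuresD(4)[OF p A] A by (auto simp: hom_of_measure_def)
    finally have "?\<phi> ?T \<longleftrightarrow> p \<in> {q \<in> ?\<Omega>. emeasure q A \<in> B}"
      using p_space by simp
    then show ?thesis
      unfolding D_def mem_Collect_eq T using A by auto
  qed
  ultimately have "sets (PP X) \<subseteq> D"
    by (rule sets_prob_algebra_subset)
  then show ?thesis using S by (auto simp: D_def)
qed

lemma emeasure_distr_return:
  assumes p: "p \<in> space (PP X)" and S: "S \<in> sets (PP X)"
  shows "emeasure (distr p (PP X) (return X)) S = emeasure p (return X -` S \<inter> space X)"
proof -
  have sets_p: "sets p = sets X" and space_p: "space p = space X"
    using p by (auto simp: space_prob_algebra dest: sets_eq_imp_space_eq)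
  then have "return X \<in> p \<rightarrow>\<^sub>M PP X"
    using measurable_return_prob_space measurable_cong_sets by blast
  then show ?thesis using S by (simp add: emeasure_distr space_p)
qed

lemma emeasure_vimage_return_zero_one:
  assumes p: "p \<in> zero_one_measures X" and S: "S \<in> sets (PP X)"
  shows "emeasure p (return X -` S \<inter> space X) = indicator S p"
proof -
  have "return X -` S \<inter> space X \<in> sets X"
    using measurable_return_prob_space S by (rule measurable_sets)
  then show ?thesis
    using hom_of_measure_vimage_return[OF p S] zero_one_measuresD(4)[OF p, of "return X -` S \<inter> space X"]
    by (auto simp: hom_of_measure_def)
qed

lemma return_eq_distr_return_iff:
  assumes p: "p \<in> space (PP X)"
  shows "return (PP X) p = distr p (PP X) (return X) \<longleftrightarrow> p \<in> zero_one_measures X"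
proof
  assume fixed: "return (PP X) p = distr p (PP X) (return X)"
  show "p \<in> zero_one_measures X"
    unfolding zero_one_measures_def
  proof (intro CollectI conjI ballI p)
    fix A assume A: "A \<in> sets X"
    define S where "S = {q \<in> space (PP X). emeasure q A = 1}"
    have S: "S \<in> sets (PP X)"
      unfolding S_def using A by measurable
    have "return X x \<in> S \<longleftrightarrow> x \<in> A" if "x \<in> space X" for x
      using A that by (simp add: S_def return_in_space_prob_algebra indicator_def)
    then have "return X -` S \<inter> space X = A"
      using sets.sets_into_space[OF A] by blast
    then have "emeasure p A = emeasure (return (PP X) p) S"
      using p S by (simp add: fixed emeasure_distr_return)
    then show "emeasure p A = 0 \<or> emeasure p A = 1"
      using S by (simp add: indicator_def)
  qed
next
  assume "p \<in> zero_one_measures X"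
  then show "return (PP X) p = distr p (PP X) (return X)"
    using p by (intro measure_eqI) (simp_all add: emeasure_distr_return emeasure_vimage_return_zero_one)
qed

lemma measurable_iff_measurable_return:
  assumes h: "h \<in> space Z \<rightarrow> space X"
  shows "h \<in> Z \<rightarrow>\<^sub>M X \<longleftrightarrow> (\<lambda>z. return X (h z)) \<in> Z \<rightarrow>\<^sub>M PP X"
proof
  assume return_h: "(\<lambda>z. return X (h z)) \<in> Z \<rightarrow>\<^sub>M PP X"
  show "h \<in> Z \<rightarrow>\<^sub>M X"
  proof (rule measurableI)
    fix A assume A: "A \<in> sets X"
    have "{z \<in> space Z. emeasure (return X (h z)) A = 1} \<in> sets Z"
      using return_h A by measurable
    moreover have "h -` A \<inter> space Z = {z \<in> space Z. emeasure (return X (h z)) A = 1}"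
      using A by (auto simp: indicator_def)
    ultimately show "h -` A \<inter> space Z \<in> sets Z" by simp
  qed (use h in auto)
qed (rule measurable_compose[OF _ measurable_return_prob_space])

lemma soberD:
  fixes Z :: "'z measure"
  assumes sober: "sober TYPE('z) X" and g: "g \<in> Z \<rightarrow>\<^sub>M PP X"
    and g_zero_one: "\<And>z. z \<in> space Z \<Longrightarrow> g z \<in> zero_one_measures X"
  shows "\<exists>h. h \<in> Z \<rightarrow>\<^sub>M X \<and> (\<forall>z\<in>space Z. return X (h z) = g z) \<and>
      (\<forall>h'. h' \<in> Z \<rightarrow>\<^sub>M X \<and> (\<forall>z\<in>space Z. return X (h' z) = g z) \<longrightarrow> (\<forall>z\<in>space Z. h' z = h z))"
proof -
  have fixed: "\<forall>z\<in>space Z. return (PP X) (g z) = distr (g z) (PP X) (return X)"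
    using g_zero_one measurable_space[OF g] by (simp add: return_eq_distr_return_iff)
  have "\<forall>(Z::'z measure) g. g \<in> Z \<rightarrow>\<^sub>M PP X \<and>
      (\<forall>z\<in>space Z. return (PP X) (g z) = distr (g z) (PP X) (return X)) \<longrightarrow>
      (\<exists>h. h \<in> Z \<rightarrow>\<^sub>M X \<and> (\<forall>z\<in>space Z. return X (h z) = g z) \<and>
        (\<forall>h'. h' \<in> Z \<rightarrow>\<^sub>M X \<and> (\<forall>z\<in>space Z. return X (h' z) = g z) \<longrightarrow> (\<forall>z\<in>space Z. h' z = h z)))"
    using sober unfolding sober_def by (elim conjE)
  from mp[OF this[THEN spec, THEN spec] conjI[OF g fixed]] show ?thesis .
qed

lemma sober_imp_unique_point:
  assumes sober: "sober TYPE('z) X" and p: "p \<in> zero_one_measures X"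
  shows "\<exists>!x\<in>space X. return X x = p"
proof -
  let ?Z = "count_space (UNIV :: 'z set)"
  have "(\<lambda>_. p) \<in> ?Z \<rightarrow>\<^sub>M PP X" using p by (simp add: zero_one_measures_def)
  then obtain h where h: "h \<in> ?Z \<rightarrow>\<^sub>M X" "\<forall>z\<in>space ?Z. return X (h z) = p"
    and unique: "\<forall>h'. h' \<in> ?Z \<rightarrow>\<^sub>M X \<and> (\<forall>z\<in>space ?Z. return X (h' z) = p) \<longrightarrow>
      (\<forall>z\<in>space ?Z. h' z = h z)"
    using soberD[OF sober] p by blast
  have "h undefined \<in> space X" using measurable_space[OF h(1)] by simp
  moreover have "x = h undefined" if "x \<in> space X" "return X x = p" for x
    using unique[THEN spec[of _ "\<lambda>_. x"]] that by simp
  ultimately show ?thesis using h(2) by auto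
qed

lemma bij_betw_return_if_sober:
  assumes "sober TYPE('z) X"
  shows "bij_betw (return X) (space X) (zero_one_measures X)"
  unfolding bij_betw_def
proof
  show "inj_on (return X) (space X)"
  proof (rule inj_onI)
    fix x y assume "x \<in> space X" "y \<in> space X" "return X x = return X y"
    then show "x = y"
      using sober_imp_unique_point[OF assms return_in_zero_one_measures] by auto
  qed
  show "return X ` space X = zero_one_measures X"
  proof (intro equalityI subsetI)
    fix p assume "p \<in> zero_one_measures X"
    then obtain x where "x \<in> space X" "return X x = p"
      using ex1_implies_ex[OF sober_imp_unique_point[OF assms]] by auto
    then show "p \<in> return X ` space X" by blast
  qed (auto simp: return_in_zero_one_measures)
qed

lemma sober_if_bij_betw_return:
  assumes bij: "bij_betw (return X) (space X) (zero_one_measures X)"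
  shows "sober TYPE('z) X"
  unfolding sober_def
proof (intro conjI ballI allI impI)
  show "return X \<in> X \<rightarrow>\<^sub>M PP X" by (rule measurable_return_prob_space)
  show "return (PP X) (return X x) = distr (return X x) (PP X) (return X)" if "x \<in> space X" for x
    using that by (simp add: return_eq_distr_return_iff return_in_space_prob_algebra return_in_zero_one_measures)
next
  fix Z :: "'z measure" and g
  assume "g \<in> Z \<rightarrow>\<^sub>M PP X \<and> (\<forall>z\<in>space Z. return (PP X) (g z) = distr (g z) (PP X) (return X))"
  then have g: "g \<in> Z \<rightarrow>\<^sub>M PP X"
    and g_zero_one: "\<And>z. z \<in> space Z \<Longrightarrow> g z \<in> zero_one_measures X"
    by (auto simp: return_eq_distr_return_iff[OF measurable_space])
  define h where "h z = the_inv_into (space X) (return X) (g z)" for z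
  have h_space: "h z \<in> space X" and return_h: "return X (h z) = g z" if "z \<in> space Z" for z
    using g_zero_one[OF that] bij the_inv_into_into[of "return X" "space X"]
    by (auto simp: h_def bij_betw_def f_the_inv_into_f)
  have "(\<lambda>z. return X (h z)) \<in> Z \<rightarrow>\<^sub>M PP X"
    using g by (subst measurable_cong[where g = g]) (simp_all add: return_h)
  then have "h \<in> Z \<rightarrow>\<^sub>M X"
    using measurable_iff_measurable_return[of h Z X] h_space by (simp add: Pi_iff)
  moreover have "h' z = h z"
    if h': "h' \<in> Z \<rightarrow>\<^sub>M X \<and> (\<forall>z\<in>space Z. return X (h' z) = g z)" and z: "z \<in> space Z" for h' z
  proof (rule inj_onD)
    show "inj_on (return X) (space X)" using bij by (simp add: bij_betw_def)
    show "return X (h' z) = return X (h z)" using h' z return_h by simp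
    show "h' z \<in> space X" using measurable_space[OF conjunct1[OF h'] z] .
  qed (rule h_space[OF z])
  ultimately show "\<exists>h. h \<in> Z \<rightarrow>\<^sub>M X \<and> (\<forall>z\<in>space Z. return X (h z) = g z) \<and>
      (\<forall>h'. h' \<in> Z \<rightarrow>\<^sub>M X \<and> (\<forall>z\<in>space Z. return X (h' z) = g z) \<longrightarrow> (\<forall>z\<in>space Z. h' z = h z))"
    using return_h by blast
qed

theorem lemma2p14:
  fixes X :: "'a measure"
  shows "(sober TYPE('z) X \<longleftrightarrow> bij_betw (return X) (space X) (zero_one_measures X))
       \<and> (bij_betw (return X) (space X) (zero_one_measures X)
            \<longleftrightarrow> measurable_iso X (Stone_sigma X) (stone_unit X))"
proof (intro conjI)
  show "sober TYPE('z) X \<longleftrightarrow> bij_betw (return X) (space X) (zero_one_measures X)"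
    using bij_betw_return_if_sober sober_if_bij_betw_return by (rule iffI)
  show "bij_betw (return X) (space X) (zero_one_measures X) \<longleftrightarrow> measurable_iso X (Stone_sigma X) (stone_unit X)"
    by (rule bij_betw_return_iff_measurable_iso_stone_unit)
qed

end
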